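(* Let $q$ be a prime power. For $n\in\{2,3\}$, the orbitals of $GU(n,q)$ acting on $\Phi(n,q)$ are exactly the $2(q^2-1)$ sets $S_{\alpha^i}$ and $R_{\alpha^i}$, $0\le i\le q^2-2$. For $n\ge 4$, the orbitals are exactly these sets together with $T$. Consequently the rank of the permutation group $(GU(n,q),\Phi(n,q))$ (equivalently, the number of relations of the Schurian association scheme $\mathcal X(GU(n,q),\Phi(n,q))$) is $2q^2-2$ if $n\in\{2,3\}$ and $2q^2-1$ if $n\ge 4$.
   Context: Let $q$ be a prime power, $V=\mathbb{F}_{q^2}^n$ with Hermitian form $\langle x,y\rangle=\sum_{k=1}^n x_k y_k^{\,q}$, $GU(n,q)=\{U\in GL_n(\mathbb{F}_{q^2}):U\bar U^T=I\}$ ($\bar U$ = entrywise $q$-th power) acting on the right on $V$, and on pairs by $(x,y)U=(xU,yU)$. $\Phi=\Phi(n,q)=\{x\in V\setminus\{0\}:\langle x,x\rangle=0\}$. An orbital is an orbit of the group on $\Phi\times\Phi$; the orbitals of a transitive group form the relations of the Schurian association scheme $\mathcal X(G,\Phi)$. Fix a primitive element $\alpha$ of $\mathbb{F}_{q^2}$; for $0\le i\le q^2-2$ let $S_{\alpha^i}=\{(x,y)\in\Phi\times\Phi:y=\alpha^ix\}$, $R_{\alpha^i}=\{(x,y)\in\Phi\times\Phi:\langle x,y\rangle=\alpha^i\}$, and $T=\{(x,y)\in\Phi\times\Phi:\langle x,y\rangle=0,\ y\notin\mathrm{Span}\{x\}\}$. *)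

theory Defs
  imports "HOL-Analysis.Analysis" "HOL-Computational_Algebra.Primes"
begin

text \<open>F_{q^2} is rendered as a finite field type 'a with CARD('a) = q^2; V = 'a^'n with CARD('n) = n.
  Conjugation is the Frobenius c \<mapsto> c^q.\<close>

definition herm :: "nat \<Rightarrow> 'a::{field,finite}^'n \<Rightarrow> 'a^'n \<Rightarrow> 'a" where
  "herm q x y = (\<Sum>k\<in>UNIV. x$k * (y$k)^q)"

definition conjmat :: "nat \<Rightarrow> 'a::{field,finite}^'n^'n \<Rightarrow> 'a^'n^'n" where
  "conjmat q U = (\<chi> i j. (U$i$j)^q)"

definition GU :: "nat \<Rightarrow> ('a::{field,finite}^'n^'n) set" where
  "GU q = {U. U ** transpose (conjmat q U) = mat 1}"

definition Phi :: "nat \<Rightarrow> ('a::{field,finite}^'n) set" where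
  "Phi q = {x. x \<noteq> 0 \<and> herm q x x = 0}"

text \<open>Right action x \<mapsto> xU (row vector times matrix), diagonal action on pairs.
  An orbital is an orbit of GU(n,q) on Phi \<times> Phi.\<close>
definition orbitals :: "nat \<Rightarrow> (('a::{field,finite}^'n) \<times> ('a^'n)) set set" where
  "orbitals q = {{(x v* U, y v* U) | U. U \<in> GU q} | x y. x \<in> Phi q \<and> y \<in> Phi q}"

definition S_rel :: "nat \<Rightarrow> 'a::{field,finite} \<Rightarrow> (('a^'n) \<times> ('a^'n)) set" where
  "S_rel q a = {(x, y). x \<in> Phi q \<and> y \<in> Phi q \<and> y = a *s x}"

definition R_rel :: "nat \<Rightarrow> 'a::{field,finite} \<Rightarrow> (('a^'n) \<times> ('a^'n)) set" where
  "R_rel q a = {(x, y). x \<in> Phi q \<and> y \<in> Phi q \<and> herm q x y = a}"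

definition T_rel :: "nat \<Rightarrow> (('a::{field,finite}^'n) \<times> ('a^'n)) set" where
  "T_rel q = {(x, y). x \<in> Phi q \<and> y \<in> Phi q \<and> herm q x y = 0 \<and> \<not> (\<exists>c. y = c *s x)}"

definition primitive_elt :: "'a::{field,finite} \<Rightarrow> bool" where
  "primitive_elt \<alpha> \<longleftrightarrow> (\<forall>x. x \<noteq> 0 \<longrightarrow> (\<exists>i::nat. x = \<alpha>^i))"

end

theory Submission
  imports Defs "HOL-Number_Theory.Residues"
begin

text \<open>
  Gram--Schmidt works for the Hermitian form because norm and trace of \<open>F\<^sub>q\<^sub>2\<close> over
  \<open>F\<^sub>q\<close> are onto, so every orthonormal family extends to a unitary matrix and \<open>GU(n,q)\<close>
  maps any orthonormal family to any other one of the same size. A hyperbolic pair \<open>(x, z)\<close>,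
  i.e.\ \<open>\<langle>x,x\<rangle> = \<langle>z,z\<rangle> = 0\<close> and \<open>\<langle>x,z\<rangle> = 1\<close>, is a fixed combination of an orthonormal pair,
  hence \<open>GU(n,q)\<close> is transitive on hyperbolic pairs and on pairs of mutually orthogonal
  hyperbolic pairs. Every isotropic \<open>x\<close> has a hyperbolic partner; if \<open>\<langle>x,y\<rangle> = a \<noteq> 0\<close> then
  \<open>a\<^sup>-\<^sup>q y\<close> is one, and a pair in \<open>T\<close> extends to two orthogonal hyperbolic pairs, which
  needs four orthonormal vectors and so \<open>n \<ge> 4\<close>. Hence each \<open>S\<^sub>a\<close>, \<open>R\<^sub>a\<close> and \<open>T\<close> is a single
  orbital; explicit witnesses show that they are pairwise distinct and that \<open>T\<close> is nonempty
  once \<open>n \<ge> 4\<close>.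
\<close>

section \<open>Finite fields\<close>

lemma finite_field_power_card:
  fixes x :: "'a::{field,finite}"
  shows "x ^ CARD('a) = x"
proof (cases "x = 0")
  case True
  then show ?thesis
    using finite_UNIV_card_ge_0[where 'a='a] by simp
next
  case False
  let ?U = "UNIV - {0::'a}"
  have "bij_betw ((*) x) ?U ?U"
    by (rule bij_betwI[of _ _ _ "\<lambda>y. y / x"]) (use False in auto)
  then have "(\<Prod>y\<in>?U. x * y) = \<Prod>?U"
    by (rule prod.reindex_bij_betw)
  moreover have "(\<Prod>y\<in>?U. x * y) = x ^ card ?U * \<Prod>?U"
    by (simp add: prod.distrib)
  moreover have "\<Prod>?U \<noteq> 0"
    by simp
  ultimately have "x ^ card ?U = 1"
    by simp
  moreover have "CARD('a) = Suc (card ?U)"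
    using finite_UNIV_card_ge_0[where 'a='a] by (simp add: card_Diff_singleton)
  ultimately show ?thesis
    by (simp only: power_Suc mult_1_right)
qed

lemma CHAR_eq_of_card_prime_power:
  assumes "prime p" and "m > 0" and "CARD('a::{field,finite}) = p ^ m"
  shows "CHAR('a) = p"
proof -
  have prime_char: "prime CHAR('a)"
    by (rule prime_CHAR_semidom) (simp add: finite_imp_CHAR_pos)
  have "CHAR('a) dvd p ^ m"
    using CHAR_dvd_CARD[where 'a='a] assms(3) by simp
  then have "CHAR('a) dvd p"
    using prime_char prime_dvd_power by blast
  then show ?thesis
    using prime_char assms(1) by (simp add: primes_dvd_imp_eq)
qed

lemma frobenius_add:
  fixes a b :: "'a::{field,finite}"
  assumes "prime p" and "m > 0" and "CARD('a) = p ^ m"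
  shows "(a + b) ^ (p ^ k) = a ^ (p ^ k) + b ^ (p ^ k)"
proof (rule freshmans_dream')
  show "prime CHAR('a)" and "p ^ k = CHAR('a) ^ k"
    using assms CHAR_eq_of_card_prime_power[OF assms] by simp_all
qed

lemma exists_inj_on_lessThan:
  assumes "k \<le> CARD('n::finite)"
  shows "\<exists>f :: nat \<Rightarrow> 'n. inj_on f {..<k}"
  using card_le_inj[of "{..<k}" "UNIV :: 'n set"] assms by auto

locale frobenius_field =
  fixes q :: nat and \<alpha> :: "'a::{field,finite}"
  assumes card_field: "CARD('a) = q ^ 2"
    and power_q_add: "\<And>a b::'a. (a + b) ^ q = a ^ q + b ^ q"
    and primitive: "primitive_elt \<alpha>"
begin

lemma q_ge_2: "q \<ge> 2"
proof (rule ccontr)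
  assume "\<not> q \<ge> 2"
  then have "q ^ 2 \<le> 1 ^ 2"
    by (intro power_mono) auto
  moreover have "card {0, 1::'a} \<le> CARD('a)"
    by (rule card_mono) auto
  ultimately show False
    using card_field by simp
qed

definition bar :: "'a \<Rightarrow> 'a" where
  "bar a = a ^ q"

lemma bar_add [simp]: "bar (a + b) = bar a + bar b"
  by (simp add: bar_def power_q_add)

lemma bar_mult [simp]: "bar (a * b) = bar a * bar b"
  by (simp add: bar_def power_mult_distrib)

lemma bar_0 [simp]: "bar 0 = 0"
  using q_ge_2 by (simp add: bar_def)

lemma bar_1 [simp]: "bar 1 = 1"
  by (simp add: bar_def)

lemma bar_minus [simp]: "bar (- a) = - bar a"
  using bar_add[of a "- a"] by (metis add.inverse_unique add.right_inverse bar_0)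

lemma bar_diff [simp]: "bar (a - b) = bar a - bar b"
  using bar_add[of a "- b"] by simp

lemma bar_inverse [simp]: "bar (inverse a) = inverse (bar a)"
  by (simp add: bar_def power_inverse)

lemma bar_divide [simp]: "bar (a / b) = bar a / bar b"
  by (simp add: bar_def power_divide)

lemma bar_bar [simp]: "bar (bar a) = a"
  using finite_field_power_card[of a] card_field
  by (simp add: bar_def power2_eq_square power_mult)

lemma bar_eq_0_iff [simp]: "bar a = 0 \<longleftrightarrow> a = 0"
  using q_ge_2 by (simp add: bar_def)

lemma bar_sum: "bar (sum f A) = (\<Sum>i\<in>A. bar (f i))"
  by (induct A rule: infinite_finite_induct) auto

lemma q_square_minus_1:
  "0 < q - 1" "q - 1 < q ^ 2 - 1" "q ^ 2 - 1 = (q - 1) * (q + 1)"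
proof -
  obtain m where "q = 2 + m"
    using le_Suc_ex[OF q_ge_2] by blast
  then show "0 < q - 1" "q - 1 < q ^ 2 - 1" "q ^ 2 - 1 = (q - 1) * (q + 1)"
    by (simp_all add: power2_eq_square)
qed

lemma card_nonzero: "card (UNIV - {0::'a}) = q ^ 2 - 1"
  using card_field by (simp add: card_Diff_singleton)

lemma power_card_nonzero_eq_1:
  fixes x :: 'a
  assumes "x \<noteq> 0"
  shows "x ^ (q ^ 2 - 1) = 1"
proof -
  have card: "Suc (q ^ 2 - 1) = CARD('a)"
    using q_square_minus_1 card_field by simp
  have "x ^ (q ^ 2 - 1) * x = x ^ CARD('a)"
    by (simp only: power_Suc2 flip: card)
  also have "\<dots> = 1 * x"
    using finite_field_power_card[of x] by simp
  finally show ?thesis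
    using assms by simp
qed

lemma primitive_nonzero: "\<alpha> \<noteq> 0"
proof
  assume "\<alpha> = 0"
  have "x = 1" if "x \<noteq> 0" for x :: 'a
  proof -
    obtain i where "x = \<alpha> ^ i"
      using primitive \<open>x \<noteq> 0\<close> by (auto simp: primitive_elt_def)
    with \<open>\<alpha> = 0\<close> \<open>x \<noteq> 0\<close> show ?thesis
      by (cases i) simp_all
  qed
  then have "card (UNIV - {0::'a}) \<le> card {1::'a}"
    by (intro card_mono) auto
  moreover have "2 ^ 2 \<le> q ^ 2"
    using q_ge_2 by (rule power_mono) simp
  ultimately show False
    using card_nonzero by simp
qed

lemma primitive_power_mod: "\<alpha> ^ m = \<alpha> ^ (m mod (q ^ 2 - 1))"
proof -
  have "\<alpha> ^ m = (\<alpha> ^ (q ^ 2 - 1)) ^ (m div (q ^ 2 - 1)) * \<alpha> ^ (m mod (q ^ 2 - 1))"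
    by (simp flip: power_mult power_add)
  then show ?thesis
    using power_card_nonzero_eq_1[OF primitive_nonzero] by simp
qed

lemma primitive_power_eq_1_iff: "\<alpha> ^ m = 1 \<longleftrightarrow> (q ^ 2 - 1) dvd m"
proof
  assume "(q ^ 2 - 1) dvd m"
  then show "\<alpha> ^ m = 1"
    using power_card_nonzero_eq_1[OF primitive_nonzero] by (auto simp: power_mult)
next
  assume "\<alpha> ^ m = 1"
  define r where "r = m mod (q ^ 2 - 1)"
  have r: "\<alpha> ^ r = 1"
    using \<open>\<alpha> ^ m = 1\<close> primitive_power_mod by (simp add: r_def)
  have "r < q ^ 2 - 1"
    using q_square_minus_1 by (simp add: r_def)
  show "(q ^ 2 - 1) dvd m"
  proof (rule ccontr)
    assume "\<not> (q ^ 2 - 1) dvd m"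
    then have "r > 0"
      by (metis r_def dvd_eq_mod_eq_0 gr0I)
    \<comment> \<open>the powers of \<open>\<alpha>\<close> would repeat with period \<open>r\<close>, too short to reach every nonzero element\<close>
    have "UNIV - {0::'a} \<subseteq> (\<lambda>i. \<alpha> ^ i) ` {..<r}"
    proof
      fix x :: 'a
      assume "x \<in> UNIV - {0}"
      then obtain i where "x = \<alpha> ^ i"
        using primitive by (auto simp: primitive_elt_def)
      also have "\<dots> = (\<alpha> ^ r) ^ (i div r) * \<alpha> ^ (i mod r)"
        by (simp flip: power_mult power_add)
      finally show "x \<in> (\<lambda>i. \<alpha> ^ i) ` {..<r}"
        using r \<open>r > 0\<close> by simp
    qed
    then have "card (UNIV - {0::'a}) \<le> card ((\<lambda>i. \<alpha> ^ i) ` {..<r})"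
      by (intro card_mono) auto
    then have "q ^ 2 - 1 \<le> r"
      using card_nonzero card_image_le[of "{..<r}" "\<lambda>i. \<alpha> ^ i"] by simp
    with \<open>r < q ^ 2 - 1\<close> show False
      by simp
  qed
qed

lemma primitive_power_reindex: "{f (\<alpha> ^ i) | i. i < q ^ 2 - 1} = f ` (UNIV - {0})"
proof -
  have "(\<lambda>i. \<alpha> ^ i) ` {..<q ^ 2 - 1} = UNIV - {0}"
  proof
    show "UNIV - {0} \<subseteq> (\<lambda>i. \<alpha> ^ i) ` {..<q ^ 2 - 1}"
    proof
      fix x :: 'a
      assume "x \<in> UNIV - {0}"
      then obtain i where "x = \<alpha> ^ (i mod (q ^ 2 - 1))"
        using primitive primitive_power_mod by (auto simp: primitive_elt_def)
      moreover have "i mod (q ^ 2 - 1) < q ^ 2 - 1"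
        using q_square_minus_1 by simp
      ultimately show "x \<in> (\<lambda>i. \<alpha> ^ i) ` {..<q ^ 2 - 1}"
        by blast
    qed
  qed (use primitive_nonzero in auto)
  moreover have "{f (\<alpha> ^ i) | i. i < q ^ 2 - 1} = f ` ((\<lambda>i. \<alpha> ^ i) ` {..<q ^ 2 - 1})"
    by auto
  ultimately show ?thesis
    by simp
qed

lemma bar_primitive: "bar \<alpha> \<noteq> \<alpha>"
proof
  assume "bar \<alpha> = \<alpha>"
  have "Suc (q - 1) = q"
    using q_ge_2 by simp
  then have "\<alpha> ^ (q - 1) * \<alpha> = bar \<alpha>"
    by (simp only: bar_def power_Suc2[symmetric])
  then have "\<alpha> ^ (q - 1) * \<alpha> = 1 * \<alpha>"
    using \<open>bar \<alpha> = \<alpha>\<close> by simp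
  then have "(q ^ 2 - 1) dvd (q - 1)"
    using primitive_nonzero primitive_power_eq_1_iff by simp
  with q_square_minus_1(1,2) show False
    by (simp add: nat_dvd_not_less)
qed

lemma exists_norm_eq:
  assumes "r \<noteq> 0" and "bar r = r"
  shows "\<exists>c. c * bar c = r"
proof -
  obtain j where r: "r = \<alpha> ^ j"
    using primitive assms(1) by (auto simp: primitive_elt_def)
  \<comment> \<open>\<open>r\<^sup>q = r\<close> forces \<open>q + 1\<close> to divide \<open>j\<close>, and then \<open>r\<close> is the norm of \<open>\<alpha>\<^sup>j\<^sup>/\<^sup>(\<^sup>q\<^sup>+\<^sup>1\<^sup>)\<close>\<close>
  have exponent: "j + j * (q - 1) = j * q"
    using q_ge_2 by (cases q) (simp_all add: algebra_simps)
  have "\<alpha> ^ j * \<alpha> ^ (j * (q - 1)) = bar r"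
    by (simp only: r bar_def exponent power_add[symmetric] power_mult[symmetric])
  then have "\<alpha> ^ j * \<alpha> ^ (j * (q - 1)) = \<alpha> ^ j * 1"
    using assms(2) r by simp
  then have "(q ^ 2 - 1) dvd j * (q - 1)"
    using primitive_nonzero primitive_power_eq_1_iff by simp
  then have "(q - 1) * (q + 1) dvd (q - 1) * j"
    unfolding q_square_minus_1(3) by (simp only: mult.commute)
  then have "(q + 1) dvd j"
    using nat_mult_dvd_cancel1[OF q_square_minus_1(1)] by blast
  then obtain k where "j = (q + 1) * k" ..
  then have "j = k + k * q"
    by (simp add: algebra_simps)
  then have "\<alpha> ^ k * bar (\<alpha> ^ k) = r"
    by (simp add: r bar_def power_add power_mult)
  then show ?thesis ..
qed

lemma exists_trace_eq:
  assumes "bar r = r"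
  shows "\<exists>t. t + bar t = r"
proof -
  obtain t where t: "t + bar t \<noteq> 0"
  proof (cases "(1::'a) + 1 = 0")
    case True
    \<comment> \<open>in characteristic 2 the trace of \<open>1\<close> vanishes, but that of \<open>\<alpha>\<close> does not\<close>
    then have "- \<alpha> = \<alpha>"
      by (metis add.inverse_unique distrib_left mult.comm_neutral mult_zero_right)
    then have "\<alpha> + bar \<alpha> \<noteq> 0"
      using bar_primitive by (metis add.inverse_unique)
    then show ?thesis
      using that by blast
  qed (use that[of 1] in simp)
  define c where "c = r / (t + bar t)"
  have "bar c = c"
    using assms by (simp add: c_def add.commute)
  then have "c * t + bar (c * t) = c * (t + bar t)"
    by (simp add: distrib_left)
  also have "\<dots> = r"
    using t by (simp add: c_def)
  finally show ?thesis ..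
qed

section \<open>The Hermitian form and the unitary group\<close>

abbreviation herm_form :: "'a^'n \<Rightarrow> 'a^'n \<Rightarrow> 'a" (\<open>\<langle>_, _\<rangle>\<close>) where
  "\<langle>x, y\<rangle> \<equiv> herm q x y"

lemma herm_bar: "\<langle>x, y\<rangle> = (\<Sum>k\<in>UNIV. x $ k * bar (y $ k))"
  by (simp add: herm_def bar_def)

lemma herm_add_left: "\<langle>x + y, z\<rangle> = \<langle>x, z\<rangle> + \<langle>y, z\<rangle>"
  by (simp add: herm_bar distrib_right sum.distrib)

lemma herm_add_right: "\<langle>x, y + z\<rangle> = \<langle>x, y\<rangle> + \<langle>x, z\<rangle>"
  by (simp add: herm_bar distrib_left sum.distrib)

lemma herm_diff_left: "\<langle>x - y, z\<rangle> = \<langle>x, z\<rangle> - \<langle>y, z\<rangle>"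
  by (simp add: herm_bar left_diff_distrib sum_subtractf)

lemma herm_diff_right: "\<langle>x, y - z\<rangle> = \<langle>x, y\<rangle> - \<langle>x, z\<rangle>"
  by (simp add: herm_bar right_diff_distrib sum_subtractf)

lemma herm_scale_left: "\<langle>c *s x, y\<rangle> = c * \<langle>x, y\<rangle>"
  by (simp add: herm_bar sum_distrib_left mult.assoc)

lemma herm_scale_right: "\<langle>x, c *s y\<rangle> = bar c * \<langle>x, y\<rangle>"
  by (simp add: herm_bar sum_distrib_left mult_ac)

lemmas herm_linear = herm_add_left herm_add_right herm_diff_left herm_diff_right
  herm_scale_left herm_scale_right

lemma herm_zero_right [simp]: "\<langle>x, 0\<rangle> = 0"
  by (simp add: herm_bar)

lemma herm_commute: "\<langle>y, x\<rangle> = bar \<langle>x, y\<rangle>"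
  by (simp add: herm_bar bar_sum mult.commute)

lemma herm_eq_0_commute: "\<langle>y, x\<rangle> = 0 \<longleftrightarrow> \<langle>x, y\<rangle> = 0"
  by (simp add: herm_commute[of y x])

lemma herm_sum_left: "\<langle>sum f A, y\<rangle> = (\<Sum>i\<in>A. \<langle>f i, y\<rangle>)"
  by (simp add: herm_bar sum_component sum_distrib_right) (rule sum.swap)

lemma herm_sum_right: "\<langle>x, sum f A\<rangle> = (\<Sum>i\<in>A. \<langle>x, f i\<rangle>)"
  by (simp add: herm_commute[of x] herm_sum_left bar_sum)

lemma herm_axis_right: "\<langle>x, axis k 1\<rangle> = x $ k"
proof -
  have "x $ j * bar (axis k 1 $ j) = (if j = k then x $ k else 0)" for j
    by (simp add: axis_def)
  then show ?thesis
    by (simp add: herm_bar)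
qed

lemma herm_axis_axis: "\<langle>axis i 1, axis j 1\<rangle> = (if i = j then 1 else 0)"
  by (simp only: herm_axis_right) (simp add: axis_def)

lemma herm_nondegenerate:
  assumes "\<And>y. \<langle>x, y\<rangle> = 0"
  shows "x = 0"
  using assms[of "axis _ 1"] by (simp add: herm_axis_right vec_eq_iff)

lemma exists_herm_eq_1:
  assumes "x \<noteq> 0"
  shows "\<exists>w. \<langle>x, w\<rangle> = 1"
proof -
  obtain k where "x $ k \<noteq> 0"
    using assms by (auto simp: vec_eq_iff)
  then have "\<langle>x, bar (inverse (x $ k)) *s axis k 1\<rangle> = 1"
    by (simp add: herm_scale_right herm_axis_right)
  then show ?thesis ..
qed

lemma bar_herm_self: "bar \<langle>x, x\<rangle> = \<langle>x, x\<rangle>"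
  using herm_commute[of x x] by simp

lemma exists_unit_multiple:
  assumes "\<langle>v, v\<rangle> \<noteq> 0"
  shows "\<exists>c. \<langle>c *s v, c *s v\<rangle> = 1"
proof -
  obtain c where "c * bar c = inverse \<langle>v, v\<rangle>"
    using exists_norm_eq[of "inverse \<langle>v, v\<rangle>"] assms bar_herm_self by auto
  moreover have "\<langle>c *s v, c *s v\<rangle> = (c * bar c) * \<langle>v, v\<rangle>"
    by (simp add: herm_scale_left herm_scale_right mult_ac)
  ultimately show ?thesis
    using assms by auto
qed

lemma Phi_iff: "(x :: 'a^'n) \<in> Phi q \<longleftrightarrow> x \<noteq> 0 \<and> \<langle>x, x\<rangle> = 0"
  by (simp add: Phi_def)

lemma scale_Phi:
  fixes x :: "'a^'n"
  shows "c \<noteq> 0 \<Longrightarrow> x \<in> Phi q \<Longrightarrow> c *s x \<in> Phi q"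
  by (auto simp: Phi_iff herm_scale_left herm_scale_right vec_eq_iff)

lemma GU_iff_orthonormal_rows:
  "(U::'a^'n^'n) \<in> GU q \<longleftrightarrow> (\<forall>i j. \<langle>U $ i, U $ j\<rangle> = (if i = j then 1 else 0))"
  by (simp add: GU_def vec_eq_iff matrix_matrix_mult_def transpose_def conjmat_def mat_def herm_def)

lemma vector_matrix_mult_rows: "(x::'a^'n) v* U = (\<Sum>i\<in>UNIV. x $ i *s U $ i)"
  by (simp add: vec_eq_iff vector_matrix_mult_def sum_component mult.commute)

lemma axis_vector_matrix_mult: "axis i 1 v* (U::'a^'n^'n) = U $ i"
proof -
  have "axis i 1 $ k *s U $ k = (if k = i then U $ i else 0)" for k
    by (simp add: axis_def)
  then show ?thesis
    by (simp add: vector_matrix_mult_rows)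
qed

lemma herm_row_GU:
  assumes "(U::'a^'n^'n) \<in> GU q"
  shows "\<langle>U $ i, y v* U\<rangle> = bar (y $ i)"
proof -
  have "\<langle>U $ i, y v* U\<rangle> = (\<Sum>j\<in>UNIV. bar (y $ j) * \<langle>U $ i, U $ j\<rangle>)"
    by (simp add: vector_matrix_mult_rows herm_sum_right herm_scale_right)
  also have "\<dots> = (\<Sum>j\<in>UNIV. if j = i then bar (y $ i) else 0)"
    using assms by (intro sum.cong) (auto simp: GU_iff_orthonormal_rows)
  finally show ?thesis
    by simp
qed

lemma herm_GU:
  assumes "(U::'a^'n^'n) \<in> GU q"
  shows "\<langle>x v* U, y v* U\<rangle> = \<langle>x, y\<rangle>"
proof -
  have "\<langle>x v* U, y v* U\<rangle> = (\<Sum>i\<in>UNIV. x $ i * \<langle>U $ i, y v* U\<rangle>)"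
    by (simp only: vector_matrix_mult_rows[of x] herm_sum_left herm_scale_left)
  also have "\<dots> = (\<Sum>i\<in>UNIV. x $ i * bar (y $ i))"
    by (simp only: herm_row_GU[OF assms])
  finally show ?thesis
    by (simp add: herm_bar)
qed

lemma GU_inverse:
  assumes "(U::'a^'n^'n) \<in> GU q"
  shows "\<exists>W\<in>GU q. U ** W = mat 1 \<and> W ** U = mat 1"
proof -
  define W where "W = transpose (conjmat q U)"
  have "U ** W = mat 1"
    using assms by (simp add: GU_def W_def)
  moreover from this have "W ** U = mat 1"
    using matrix_left_right_inverse by blast
  moreover have "transpose (conjmat q W) = U"
    using bar_bar by (simp add: W_def vec_eq_iff transpose_def conjmat_def bar_def)
  ultimately show ?thesis
    by (auto simp: GU_def)
qed

lemma GU_mult: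
  assumes "(A::'a^'n^'n) \<in> GU q" and "B \<in> GU q"
  shows "A ** B \<in> GU q"
proof -
  have "(A ** B) $ i = A $ i v* B" for i
    by (simp add: vec_eq_iff matrix_matrix_mult_def vector_matrix_mult_def mult.commute)
  then show ?thesis
    using assms by (simp add: GU_iff_orthonormal_rows herm_GU)
qed

lemma GU_cancel:
  assumes "(U::'a^'n^'n) \<in> GU q" and "x v* U = y v* U"
  shows "x = y"
proof -
  obtain W where "U ** W = mat 1"
    using GU_inverse[OF assms(1)] by blast
  then show ?thesis
    using arg_cong[where f = "\<lambda>v. v v* W", OF assms(2)] by (simp add: vector_matrix_mul_assoc)
qed

lemma Phi_GU:
  assumes "(U::'a^'n^'n) \<in> GU q" and "x \<in> Phi q"
  shows "x v* U \<in> Phi q"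
proof -
  have "x v* U \<noteq> 0"
  proof
    assume "x v* U = 0"
    then have "x v* U = 0 v* U"
      by simp
    then have "x = 0"
      by (rule GU_cancel[OF assms(1)])
    with assms(2) show False
      by (simp add: Phi_iff)
  qed
  then show ?thesis
    using assms by (simp add: Phi_iff herm_GU)
qed

section \<open>Orthonormal families\<close>

definition orthonormal_on :: "'i set \<Rightarrow> ('i \<Rightarrow> 'a^'n) \<Rightarrow> bool" where
  "orthonormal_on I u \<longleftrightarrow> (\<forall>i\<in>I. \<forall>j\<in>I. \<langle>u i, u j\<rangle> = (if i = j then 1 else 0))"

lemma herm_sum_orthonormal:
  assumes "orthonormal_on I u" and "finite I" and "k \<in> I"
  shows "\<langle>\<Sum>i\<in>I. c i *s u i, u k\<rangle> = c k"
proof -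
  have "\<langle>\<Sum>i\<in>I. c i *s u i, u k\<rangle> = (\<Sum>i\<in>I. if i = k then c i else 0)"
    using assms(1,3) unfolding orthonormal_on_def
    by (auto simp: herm_sum_left herm_scale_left intro!: sum.cong)
  then show ?thesis
    using assms(2,3) by simp
qed

lemma card_orthonormal_span:
  assumes "orthonormal_on I u" and "finite I"
  shows "card ((\<lambda>c. \<Sum>i\<in>I. c i *s u i) ` (I \<rightarrow>\<^sub>E UNIV)) = CARD('a) ^ card I"
proof -
  have "inj_on (\<lambda>c. \<Sum>i\<in>I. c i *s u i) (I \<rightarrow>\<^sub>E UNIV)"
  proof (rule inj_onI)
    fix c d
    assume "c \<in> I \<rightarrow>\<^sub>E UNIV" "d \<in> I \<rightarrow>\<^sub>E UNIV" and eq: "(\<Sum>i\<in>I. c i *s u i) = (\<Sum>i\<in>I. d i *s u i)"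
    moreover have "c k = d k" if "k \<in> I" for k
      using arg_cong[where f = "\<lambda>v. \<langle>v, u k\<rangle>", OF eq] herm_sum_orthonormal[OF assms that]
      by simp
    ultimately show "c = d"
      using PiE_ext by blast
  qed
  then show ?thesis
    using assms(2) by (simp add: card_image card_PiE)
qed

lemma card_field_gt_1: "1 < CARD('a)"
  using q_ge_2 card_field power_mono[of 2 q 2] by simp

lemma orthonormal_card_le:
  fixes u :: "'i \<Rightarrow> 'a^'n"
  assumes "orthonormal_on I u" and "finite I"
  shows "card I \<le> CARD('n)"
proof -
  have "CARD('a) ^ card I \<le> CARD('a^'n)"
    unfolding card_orthonormal_span[OF assms, symmetric] by (rule card_mono) auto
  then show ?thesis
    using card_field_gt_1 power_le_imp_le_exp by simp
qed

lemma orthonormal_not_spanning: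
  fixes u :: "'n \<Rightarrow> 'a^'n"
  assumes "orthonormal_on I u" and "j \<notin> I"
  shows "\<exists>x. x \<noteq> (\<Sum>i\<in>I. \<langle>x, u i\<rangle> *s u i)"
proof (rule ccontr)
  assume "\<not> ?thesis"
  then have span: "x = (\<Sum>i\<in>I. \<langle>x, u i\<rangle> *s u i)" for x
    by blast
  have "x \<in> (\<lambda>c. \<Sum>i\<in>I. c i *s u i) ` (I \<rightarrow>\<^sub>E UNIV)" for x
  proof (rule image_eqI[where x = "restrict (\<lambda>i. \<langle>x, u i\<rangle>) I"])
    show "x = (\<Sum>i\<in>I. restrict (\<lambda>i. \<langle>x, u i\<rangle>) I i *s u i)"
      by (rule trans[OF span[of x]]) (rule sum.cong, simp_all)
  qed simp
  then have "UNIV \<subseteq> (\<lambda>c. \<Sum>i\<in>I. c i *s u i) ` (I \<rightarrow>\<^sub>E UNIV)"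
    by blast
  from card_mono[OF _ this] have "CARD('a) ^ CARD('n) \<le> CARD('a) ^ card I"
    using card_orthonormal_span[OF assms(1)] by simp
  moreover have "card I < CARD('n)"
    using assms(2) by (intro psubset_card_mono) auto
  ultimately show False
    using card_field_gt_1 power_le_imp_le_exp by fastforce
qed

text \<open>Polarization with the scalars \<open>1\<close> and \<open>\<alpha>\<close>; this is where \<open>bar \<alpha> \<noteq> \<alpha>\<close> is needed.\<close>

lemma isotropic_subspace_orthogonal:
  assumes closed: "\<And>a b c. a \<in> W \<Longrightarrow> b \<in> W \<Longrightarrow> a + c *s b \<in> W"
    and isotropic: "\<And>v. v \<in> W \<Longrightarrow> \<langle>v, v\<rangle> = 0"
    and "w \<in> W" and "v \<in> W"
  shows "\<langle>w, v\<rangle> = 0"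
proof -
  have "\<langle>w + v, w + v\<rangle> = 0"
    using isotropic closed[of w v 1] assms(3,4) by simp
  then have "\<langle>v, w\<rangle> = - \<langle>w, v\<rangle>"
    using isotropic assms(3,4) by (simp add: herm_add_left herm_add_right eq_neg_iff_add_eq_0 add.commute)
  moreover have "\<langle>w + \<alpha> *s v, w + \<alpha> *s v\<rangle> = 0"
    using isotropic closed assms(3,4) by blast
  then have "\<alpha> * \<langle>v, w\<rangle> + bar \<alpha> * \<langle>w, v\<rangle> = 0"
    using isotropic assms(3,4) by (simp add: herm_linear)
  ultimately have "(bar \<alpha> - \<alpha>) * \<langle>w, v\<rangle> = 0"
    by (simp add: algebra_simps)
  then show ?thesis
    using bar_primitive by simp
qed

lemma exists_unit_orthogonal:
  fixes u :: "'n \<Rightarrow> 'a^'n"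
  assumes orth: "orthonormal_on I u" and "j \<notin> I"
  shows "\<exists>v. \<langle>v, v\<rangle> = 1 \<and> (\<forall>i\<in>I. \<langle>v, u i\<rangle> = 0)"
proof -
  define P where "P x = x - (\<Sum>i\<in>I. \<langle>x, u i\<rangle> *s u i)" for x
  define W where "W = {v. \<forall>i\<in>I. \<langle>v, u i\<rangle> = 0}"
  have P_W: "P x \<in> W" for x
  proof -
    have "\<langle>P x, u k\<rangle> = 0" if "k \<in> I" for k
      using herm_sum_orthonormal[OF orth finite that, of "\<lambda>i. \<langle>x, u i\<rangle>"]
      by (simp add: P_def herm_diff_left)
    then show ?thesis
      by (simp add: W_def)
  qed
  have closed: "a + c *s b \<in> W" if "a \<in> W" "b \<in> W" for a b c
    using that by (simp add: W_def herm_add_left herm_scale_left)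
  obtain x where "P x \<noteq> 0"
    using orthonormal_not_spanning[OF assms] by (auto simp: P_def)
  have "\<exists>v\<in>W. \<langle>v, v\<rangle> \<noteq> 0"
  proof (rule ccontr)
    assume "\<not> ?thesis"
    then have isotropic: "\<langle>v, v\<rangle> = 0" if "v \<in> W" for v
      using that by blast
    have "\<langle>P x, z\<rangle> = 0" for z
    proof -
      have "\<langle>P x, P z\<rangle> = 0"
        using isotropic_subspace_orthogonal[OF closed isotropic P_W P_W] .
      moreover have "\<langle>P x, u i\<rangle> = 0" if "i \<in> I" for i
        using P_W[of x] that by (simp add: W_def)
      ultimately show ?thesis
        by (simp add: P_def[of z] herm_diff_right herm_sum_right herm_scale_right)
    qed
    then show False
      using herm_nondegenerate \<open>P x \<noteq> 0\<close> by blast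
  qed
  then obtain v c where "v \<in> W" "\<langle>c *s v, c *s v\<rangle> = 1"
    using exists_unit_multiple by blast
  moreover from \<open>v \<in> W\<close> have "\<forall>i\<in>I. \<langle>c *s v, u i\<rangle> = 0"
    by (simp add: W_def herm_scale_left)
  ultimately show ?thesis
    by blast
qed

lemma orthonormal_on_insert:
  assumes "orthonormal_on I u" and "j \<notin> I"
    and "\<langle>v, v\<rangle> = 1" and "\<forall>i\<in>I. \<langle>v, u i\<rangle> = 0"
  shows "orthonormal_on (insert j I) (u(j := v))"
  using assms unfolding orthonormal_on_def by (auto simp: herm_eq_0_commute[of v])

lemma orthonormal_extends_to_GU:
  fixes u :: "'n \<Rightarrow> 'a^'n"
  assumes "orthonormal_on I u"
  shows "\<exists>U\<in>GU q. \<forall>i\<in>I. U $ i = u i"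
  using assms
proof (induction "card (UNIV - I)" arbitrary: I u rule: less_induct)
  case less
  show ?case
  proof (cases "I = UNIV")
    case True
    then have "(\<chi> i. u i) \<in> GU q"
      using less.prems by (simp add: GU_iff_orthonormal_rows orthonormal_on_def)
    then show ?thesis
      by force
  next
    case False
    then obtain j where "j \<notin> I"
      by blast
    then obtain v where "\<langle>v, v\<rangle> = 1" "\<forall>i\<in>I. \<langle>v, u i\<rangle> = 0"
      using exists_unit_orthogonal[OF less.prems] by blast
    then have "orthonormal_on (insert j I) (u(j := v))"
      using orthonormal_on_insert[OF less.prems \<open>j \<notin> I\<close>] by blast
    moreover have "card (UNIV - insert j I) < card (UNIV - I)"
      using \<open>j \<notin> I\<close> by (intro psubset_card_mono) auto
    ultimately obtain U where U: "U \<in> GU q" "\<forall>i\<in>insert j I. U $ i = (u(j := v)) i"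
      using less.hyps by blast
    have "\<forall>i\<in>I. U $ i = u i"
      using U(2) \<open>j \<notin> I\<close> by (auto split: if_splits)
    with U(1) show ?thesis
      by blast
  qed
qed

lemma orthonormal_transport_rows:
  fixes u u' :: "'n \<Rightarrow> 'a^'n"
  assumes "orthonormal_on I u" and "orthonormal_on I u'"
  shows "\<exists>V\<in>GU q. \<forall>i\<in>I. u i v* V = u' i"
proof -
  obtain U where U: "U \<in> GU q" "\<forall>i\<in>I. U $ i = u i"
    using orthonormal_extends_to_GU[OF assms(1)] by blast
  obtain U' where U': "U' \<in> GU q" "\<forall>i\<in>I. U' $ i = u' i"
    using orthonormal_extends_to_GU[OF assms(2)] by blast
  obtain W where W: "W \<in> GU q" "U ** W = mat 1"
    using GU_inverse[OF U(1)] by blast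
  have "u i v* (W ** U') = u' i" if "i \<in> I" for i
  proof -
    have "u i v* (W ** U') = ((axis i 1 v* U) v* W) v* U'"
      using U(2) that by (simp add: axis_vector_matrix_mult vector_matrix_mul_assoc)
    also have "\<dots> = (axis i 1 v* (U ** W)) v* U'"
      by (simp only: vector_matrix_mul_assoc)
    also have "\<dots> = u' i"
      using U'(2) W(2) that by (simp add: axis_vector_matrix_mult)
    finally show ?thesis .
  qed
  then show ?thesis
    using GU_mult[OF W(1) U'(1)] by blast
qed

lemma orthonormal_transport:
  fixes u u' :: "'i \<Rightarrow> 'a^'n"
  assumes "finite I" and "orthonormal_on I u" and "orthonormal_on I u'"
  shows "\<exists>V\<in>GU q. \<forall>i\<in>I. u i v* V = u' i"
proof -
  obtain g :: "'i \<Rightarrow> 'n" where g: "inj_on g I"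
    using card_le_inj[of I "UNIV :: 'n set"] assms(1) orthonormal_card_le[OF assms(2,1)] by auto
  let ?reindex = "\<lambda>u i. u (inv_into I g i)"
  have "orthonormal_on (g ` I) (?reindex u)" "orthonormal_on (g ` I) (?reindex u')"
    using assms(2,3) g by (auto simp: orthonormal_on_def dest: inj_onD)
  then obtain V where "V \<in> GU q" "\<forall>i\<in>g ` I. ?reindex u i v* V = ?reindex u' i"
    using orthonormal_transport_rows by blast
  then show ?thesis
    using g by auto
qed

section \<open>Hyperbolic pairs\<close>

definition hyperbolic_pair :: "'a^'n \<Rightarrow> 'a^'n \<Rightarrow> bool" where
  "hyperbolic_pair x z \<longleftrightarrow> \<langle>x, x\<rangle> = 0 \<and> \<langle>z, z\<rangle> = 0 \<and> \<langle>x, z\<rangle> = 1"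

definition trace_one :: 'a where
  "trace_one = (SOME t. t + bar t = 1)"

definition norm_minus_one :: 'a where
  "norm_minus_one = (SOME l. l * bar l = - 1)"

lemma trace_one: "trace_one + bar trace_one = 1"
  unfolding trace_one_def by (rule someI_ex) (rule exists_trace_eq, simp)

lemma norm_minus_one: "norm_minus_one * bar norm_minus_one = - 1"
  unfolding norm_minus_one_def by (rule someI_ex) (rule exists_norm_eq, simp_all)

lemma norm_minus_one_nonzero: "norm_minus_one \<noteq> 0"
  using norm_minus_one by auto

text \<open>Given a hyperbolic pair \<open>(x, z)\<close>, the conditions \<open>t + t\<^sup>q = 1\<close> and \<open>l l\<^sup>q = -1\<close> are exactly
  what makes \<open>x + t z\<close> and \<open>l (x - t\<^sup>q z)\<close> an orthonormal basis of the plane spanned by \<open>x, z\<close>.\<close>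

definition hyp_e1 :: "'a^'n \<Rightarrow> 'a^'n \<Rightarrow> 'a^'n" where
  "hyp_e1 x z = x + trace_one *s z"

definition hyp_e2 :: "'a^'n \<Rightarrow> 'a^'n \<Rightarrow> 'a^'n" where
  "hyp_e2 x z = norm_minus_one *s (x - bar trace_one *s z)"

lemma hyp_e_span:
  fixes x z :: "'a^'n"
  shows "x = (1 - trace_one) *s hyp_e1 x z + (trace_one / norm_minus_one) *s hyp_e2 x z"
  "z = hyp_e1 x z - (1 / norm_minus_one) *s hyp_e2 x z"
proof -
  have bar_trace: "bar trace_one = 1 - trace_one"
    using trace_one by (metis add.commute eq_diff_eq)
  show "x = (1 - trace_one) *s hyp_e1 x z + (trace_one / norm_minus_one) *s hyp_e2 x z"
    "z = hyp_e1 x z - (1 / norm_minus_one) *s hyp_e2 x z"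
    using norm_minus_one_nonzero
    by (simp_all add: vec_eq_iff hyp_e1_def hyp_e2_def bar_trace field_simps)
qed

lemma hyp_e_transport:
  assumes "hyp_e1 x z v* V = hyp_e1 x' z'" and "hyp_e2 x z v* V = hyp_e2 x' z'"
  shows "x v* V = x'" and "z v* V = z'"
proof -
  have "x v* V = ((1 - trace_one) *s hyp_e1 x z + (trace_one / norm_minus_one) *s hyp_e2 x z) v* V"
    using hyp_e_span(1)[where x = x and z = z] by (rule arg_cong[where f = "\<lambda>v. v v* V"])
  also have "\<dots> = (1 - trace_one) *s hyp_e1 x' z' + (trace_one / norm_minus_one) *s hyp_e2 x' z'"
    by (simp add: assms vector_matrix_left_distrib vector_matrix_mult_diff_distrib
        scalar_vector_matrix_assoc)
  finally show "x v* V = x'"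
    using hyp_e_span(1)[where x = x' and z = z'] by simp
  have "z v* V = (hyp_e1 x z - (1 / norm_minus_one) *s hyp_e2 x z) v* V"
    using hyp_e_span(2)[where x = x and z = z] by (rule arg_cong[where f = "\<lambda>v. v v* V"])
  also have "\<dots> = hyp_e1 x' z' - (1 / norm_minus_one) *s hyp_e2 x' z'"
    by (simp add: assms vector_matrix_mult_diff_distrib scalar_vector_matrix_assoc)
  finally show "z v* V = z'"
    using hyp_e_span(2)[where x = x' and z = z'] by simp
qed

lemma hyp_e_orthogonal:
  assumes "\<langle>x, y\<rangle> = 0" "\<langle>x, w\<rangle> = 0" "\<langle>z, y\<rangle> = 0" "\<langle>z, w\<rangle> = 0"
  shows "\<langle>hyp_e1 x z, hyp_e1 y w\<rangle> = 0" "\<langle>hyp_e1 x z, hyp_e2 y w\<rangle> = 0"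
    "\<langle>hyp_e2 x z, hyp_e1 y w\<rangle> = 0" "\<langle>hyp_e2 x z, hyp_e2 y w\<rangle> = 0"
  using assms by (simp_all add: hyp_e1_def hyp_e2_def herm_linear)

lemma bar_trace_one: "bar trace_one = 1 - trace_one"
  using trace_one by (metis add.commute eq_diff_eq)

lemma herm_hyp_e:
  assumes "hyperbolic_pair x z"
  shows "\<langle>hyp_e1 x z, hyp_e1 x z\<rangle> = 1" and "\<langle>hyp_e2 x z, hyp_e2 x z\<rangle> = 1"
    and "\<langle>hyp_e1 x z, hyp_e2 x z\<rangle> = 0" and "\<langle>hyp_e2 x z, hyp_e1 x z\<rangle> = 0"
proof -
  have h: "\<langle>x, x\<rangle> = 0" "\<langle>z, z\<rangle> = 0" "\<langle>x, z\<rangle> = 1" "\<langle>z, x\<rangle> = 1"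
    using assms herm_commute[of z x] by (simp_all add: hyperbolic_pair_def)
  show "\<langle>hyp_e1 x z, hyp_e1 x z\<rangle> = 1"
    using h by (simp add: hyp_e1_def herm_linear bar_trace_one)
  have "\<langle>hyp_e2 x z, hyp_e2 x z\<rangle>
      = norm_minus_one * bar norm_minus_one * \<langle>x - bar trace_one *s z, x - bar trace_one *s z\<rangle>"
    by (simp only: hyp_e2_def herm_scale_left herm_scale_right mult_ac)
  also have "\<langle>x - bar trace_one *s z, x - bar trace_one *s z\<rangle> = - (trace_one + bar trace_one)"
    using h by (simp add: herm_linear add.commute)
  finally show "\<langle>hyp_e2 x z, hyp_e2 x z\<rangle> = 1"
    by (simp add: norm_minus_one trace_one)
  show e12: "\<langle>hyp_e1 x z, hyp_e2 x z\<rangle> = 0"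
    using h by (simp add: hyp_e1_def hyp_e2_def herm_linear)
  show "\<langle>hyp_e2 x z, hyp_e1 x z\<rangle> = 0"
    using e12 herm_eq_0_commute by blast
qed

lemma hyperbolic_pair_orthonormal:
  assumes "hyperbolic_pair x z"
  shows "orthonormal_on {0, 1::nat} (nth [hyp_e1 x z, hyp_e2 x z])"
  using herm_hyp_e[OF assms] by (simp add: orthonormal_on_def)

lemma hyperbolic_pair_transitive:
  assumes "hyperbolic_pair x z" and "hyperbolic_pair x' z'"
  shows "\<exists>V\<in>GU q. x v* V = x' \<and> z v* V = z'"
proof -
  obtain V where "V \<in> GU q"
    "\<forall>i\<in>{0, 1::nat}. [hyp_e1 x z, hyp_e2 x z] ! i v* V = [hyp_e1 x' z', hyp_e2 x' z'] ! i"
    using orthonormal_transport[OF _ hyperbolic_pair_orthonormal[OF assms(1)]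
        hyperbolic_pair_orthonormal[OF assms(2)]] by blast
  then show ?thesis
    using hyp_e_transport[of x z V x' z'] by auto
qed

lemma hyperbolic_pair_adjust:
  assumes "\<langle>x, x\<rangle> = 0" and "\<langle>x, w\<rangle> = 1"
  shows "\<exists>s. hyperbolic_pair x (w + s *s x)"
proof -
  obtain s where s: "s + bar s = - \<langle>w, w\<rangle>"
    using exists_trace_eq[of "- \<langle>w, w\<rangle>"] bar_herm_self by auto
  have "\<langle>w, x\<rangle> = 1"
    using assms(2) herm_commute[of w x] by simp
  then have "\<langle>w + s *s x, w + s *s x\<rangle> = \<langle>w, w\<rangle> + (s + bar s)"
    using assms by (simp add: herm_linear add_ac)
  then have "hyperbolic_pair x (w + s *s x)"
    using assms s by (simp add: hyperbolic_pair_def herm_linear)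
  then show ?thesis ..
qed

lemma exists_hyperbolic_pair:
  assumes "x \<in> Phi q"
  shows "\<exists>z. hyperbolic_pair x z"
proof -
  have "x \<noteq> 0" "\<langle>x, x\<rangle> = 0"
    using assms by (simp_all add: Phi_iff)
  then obtain w where "\<langle>x, w\<rangle> = 1"
    using exists_herm_eq_1 by blast
  then show ?thesis
    using hyperbolic_pair_adjust \<open>\<langle>x, x\<rangle> = 0\<close> by blast
qed

definition orthogonal_hyperbolic_pairs :: "'a^'n \<Rightarrow> 'a^'n \<Rightarrow> 'a^'n \<Rightarrow> 'a^'n \<Rightarrow> bool" where
  "orthogonal_hyperbolic_pairs x z y w \<longleftrightarrow> hyperbolic_pair x z \<and> hyperbolic_pair y w \<and>
     \<langle>x, y\<rangle> = 0 \<and> \<langle>x, w\<rangle> = 0 \<and> \<langle>z, y\<rangle> = 0 \<and> \<langle>z, w\<rangle> = 0"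

lemma orthogonal_hyperbolic_pairs_orthonormal:
  assumes "orthogonal_hyperbolic_pairs x z y w"
  shows "orthonormal_on {0, 1, 2, 3::nat} (nth [hyp_e1 x z, hyp_e2 x z, hyp_e1 y w, hyp_e2 y w])"
proof -
  have pairs: "hyperbolic_pair x z" "hyperbolic_pair y w"
    and orth: "\<langle>x, y\<rangle> = 0" "\<langle>x, w\<rangle> = 0" "\<langle>z, y\<rangle> = 0" "\<langle>z, w\<rangle> = 0"
    using assms by (simp_all add: orthogonal_hyperbolic_pairs_def)
  note cross = hyp_e_orthogonal[OF orth]
  then have "\<langle>hyp_e1 y w, hyp_e1 x z\<rangle> = 0" "\<langle>hyp_e2 y w, hyp_e1 x z\<rangle> = 0"
    "\<langle>hyp_e1 y w, hyp_e2 x z\<rangle> = 0" "\<langle>hyp_e2 y w, hyp_e2 x z\<rangle> = 0"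
    using herm_eq_0_commute by blast+
  then show ?thesis
    using cross herm_hyp_e[OF pairs(1)] herm_hyp_e[OF pairs(2)]
    by (simp add: orthonormal_on_def)
qed

lemma orthogonal_hyperbolic_pairs_transitive:
  assumes "orthogonal_hyperbolic_pairs x z y w" and "orthogonal_hyperbolic_pairs x' z' y' w'"
  shows "\<exists>V\<in>GU q. x v* V = x' \<and> y v* V = y'"
proof -
  obtain V where "V \<in> GU q" and V: "\<forall>i\<in>{0, 1, 2, 3::nat}.
      [hyp_e1 x z, hyp_e2 x z, hyp_e1 y w, hyp_e2 y w] ! i v* V
    = [hyp_e1 x' z', hyp_e2 x' z', hyp_e1 y' w', hyp_e2 y' w'] ! i"
    using orthonormal_transport[OF _ orthogonal_hyperbolic_pairs_orthonormal[OF assms(1)]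
        orthogonal_hyperbolic_pairs_orthonormal[OF assms(2)]] by blast
  then show ?thesis
    using hyp_e_transport[of x z V x' z'] hyp_e_transport[of y w V y' w'] by auto
qed

lemma orthogonal_hyperbolic_pairs_dim:
  fixes x :: "'a^'n"
  assumes "orthogonal_hyperbolic_pairs x z y w"
  shows "4 \<le> CARD('n)"
  using orthonormal_card_le[OF orthogonal_hyperbolic_pairs_orthonormal[OF assms]] by simp

lemma orthogonal_complement_subset_imp_multiple:
  assumes "y \<noteq> 0" and "\<And>v. \<langle>v, y\<rangle> = 0 \<Longrightarrow> \<langle>v, x\<rangle> = 0"
  shows "\<exists>c. x = c *s y"
proof -
  obtain v0 where v0: "\<langle>v0, y\<rangle> = 1"
    using exists_herm_eq_1[OF assms(1)] herm_commute by (metis bar_1)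
  have "\<langle>v, x - bar \<langle>v0, x\<rangle> *s y\<rangle> = 0" for v
  proof -
    have "\<langle>v - \<langle>v, y\<rangle> *s v0, x\<rangle> = 0"
      by (rule assms(2)) (simp add: v0 herm_diff_left herm_scale_left)
    then have "\<langle>v, x\<rangle> = \<langle>v, y\<rangle> * \<langle>v0, x\<rangle>"
      by (simp add: herm_diff_left herm_scale_left)
    then show ?thesis
      by (simp add: herm_diff_right herm_scale_right mult.commute)
  qed
  then have "x - bar \<langle>v0, x\<rangle> *s y = 0"
    using herm_nondegenerate herm_eq_0_commute by blast
  then show ?thesis
    by (metis eq_iff_diff_eq_0)
qed

lemma T_rel_partner:
  assumes "(x, y) \<in> T_rel q"
  shows "\<exists>z. hyperbolic_pair x z \<and> \<langle>z, y\<rangle> = 0"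
proof -
  have x: "x \<in> Phi q" and y: "y \<in> Phi q" and "\<langle>x, y\<rangle> = 0" and not_multiple: "\<nexists>c. y = c *s x"
    using assms by (auto simp: T_rel_def)
  have "\<exists>v. \<langle>v, y\<rangle> = 0 \<and> \<langle>v, x\<rangle> \<noteq> 0"
  proof (rule ccontr)
    assume "\<not> ?thesis"
    then have "\<And>v. \<langle>v, y\<rangle> = 0 \<Longrightarrow> \<langle>v, x\<rangle> = 0"
      by blast
    moreover have "y \<noteq> 0"
      using y by (simp add: Phi_iff)
    ultimately obtain c where "x = c *s y"
      using orthogonal_complement_subset_imp_multiple[of y x] by blast
    then have "y = inverse c *s x"
      using x by (cases "c = 0") (auto simp: Phi_iff vec_eq_iff)
    with not_multiple show False
      by blast
  qed
  then obtain v where "\<langle>v, y\<rangle> = 0" "\<langle>v, x\<rangle> \<noteq> 0"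
    by blast
  then have "\<langle>inverse \<langle>v, x\<rangle> *s v, y\<rangle> = 0" "\<langle>x, inverse \<langle>v, x\<rangle> *s v\<rangle> = 1"
    using herm_commute[of x v] by (simp_all add: herm_scale_left herm_scale_right)
  then obtain s where "hyperbolic_pair x (inverse \<langle>v, x\<rangle> *s v + s *s x)"
    "\<langle>inverse \<langle>v, x\<rangle> *s v + s *s x, y\<rangle> = 0"
    using hyperbolic_pair_adjust x \<open>\<langle>x, y\<rangle> = 0\<close> by (metis Phi_iff herm_add_left herm_scale_left
        mult_zero_right add_0_right)
  then show ?thesis
    by blast
qed

lemma exists_orthogonal_hyperbolic_pair:
  assumes "hyperbolic_pair x z" and "y \<in> Phi q" and "\<langle>x, y\<rangle> = 0" and "\<langle>z, y\<rangle> = 0"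
  shows "\<exists>w. orthogonal_hyperbolic_pairs x z y w"
proof -
  have xz: "\<langle>x, x\<rangle> = 0" "\<langle>z, z\<rangle> = 0" "\<langle>x, z\<rangle> = 1" "\<langle>z, x\<rangle> = 1"
    using assms(1) herm_commute[of z x] by (simp_all add: hyperbolic_pair_def)
  have yxz: "\<langle>y, x\<rangle> = 0" "\<langle>y, z\<rangle> = 0"
    using assms(3,4) herm_eq_0_commute by blast+
  obtain v0 where v0: "\<langle>y, v0\<rangle> = 1"
    using exists_herm_eq_1 assms(2) by (auto simp: Phi_iff)
  \<comment> \<open>project \<open>v0\<close> away from the plane of \<open>x, z\<close>; its pairing with \<open>y\<close> is unchanged\<close>
  define v where "v = v0 - bar \<langle>z, v0\<rangle> *s x - bar \<langle>x, v0\<rangle> *s z"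
  have v: "\<langle>x, v\<rangle> = 0" "\<langle>z, v\<rangle> = 0" "\<langle>y, v\<rangle> = 1"
    using xz yxz v0 by (simp_all add: v_def herm_linear)
  obtain s where "hyperbolic_pair y (v + s *s y)"
    using hyperbolic_pair_adjust v(3) assms(2) by (auto simp: Phi_iff)
  moreover have "\<langle>x, v + s *s y\<rangle> = 0" "\<langle>z, v + s *s y\<rangle> = 0"
    using v assms(3,4) by (simp_all add: herm_linear)
  ultimately show ?thesis
    using assms by (auto simp: orthogonal_hyperbolic_pairs_def)
qed

lemma T_rel_completion:
  assumes "(x, y) \<in> T_rel q"
  shows "\<exists>z w. orthogonal_hyperbolic_pairs x z y w"
proof -
  obtain z where "hyperbolic_pair x z" "\<langle>z, y\<rangle> = 0"
    using T_rel_partner[OF assms] by blast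
  moreover have "y \<in> Phi q" "\<langle>x, y\<rangle> = 0"
    using assms by (auto simp: T_rel_def)
  ultimately show ?thesis
    using exists_orthogonal_hyperbolic_pair by blast
qed

lemma T_rel_dim:
  fixes x :: "'a^'n"
  assumes "(x, y) \<in> T_rel q"
  shows "4 \<le> CARD('n)"
  using T_rel_completion[OF assms] orthogonal_hyperbolic_pairs_dim by blast

section \<open>Orbitals\<close>

definition orbital_of :: "'a^'n \<Rightarrow> 'a^'n \<Rightarrow> (('a^'n) \<times> ('a^'n)) set" where
  "orbital_of x y = {(x v* U, y v* U) | U. U \<in> GU q}"

lemma orbitals_eq_orbital_of:
  "orbitals q = {orbital_of x y | x y. x \<in> Phi q \<and> y \<in> Phi q}"
  by (simp add: orbitals_def orbital_of_def)

lemma orbital_of_eqI: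
  assumes "(x, y) \<in> R"
    and invariant: "\<And>U a b. U \<in> GU q \<Longrightarrow> (a, b) \<in> R \<Longrightarrow> (a v* U, b v* U) \<in> R"
    and transitive: "\<And>a b. (a, b) \<in> R \<Longrightarrow> \<exists>V\<in>GU q. x v* V = a \<and> y v* V = b"
  shows "orbital_of x y = R"
  using assms unfolding orbital_of_def by fastforce

lemma orbital_of_S_rel:
  assumes "x \<in> Phi q" and "a \<noteq> 0"
  shows "orbital_of x (a *s x) = S_rel q a"
proof (rule orbital_of_eqI)
  show "(x, a *s x) \<in> S_rel q a"
    using assms scale_Phi by (simp add: S_rel_def)
  show "(x' v* U, y' v* U) \<in> S_rel q a" if "U \<in> GU q" "(x', y') \<in> S_rel q a" for U x' y'
    using that Phi_GU scale_Phi assms(2) by (auto simp: S_rel_def scalar_vector_matrix_assoc)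
  show "\<exists>V\<in>GU q. x v* V = x' \<and> a *s x v* V = y'" if "(x', y') \<in> S_rel q a" for x' y'
  proof -
    have "x' \<in> Phi q"
      using that by (simp add: S_rel_def)
    then obtain z z' where "hyperbolic_pair x z" "hyperbolic_pair x' z'"
      using exists_hyperbolic_pair assms(1) by blast
    then obtain V where "V \<in> GU q" "x v* V = x'"
      using hyperbolic_pair_transitive by blast
    then show ?thesis
      using that by (auto simp: S_rel_def scalar_vector_matrix_assoc)
  qed
qed

lemma hyperbolic_pair_of_herm_nonzero:
  assumes "x \<in> Phi q" and "y \<in> Phi q" and "\<langle>x, y\<rangle> = a" and "a \<noteq> 0"
  shows "hyperbolic_pair x (bar (inverse a) *s y)" and "y = bar a *s (bar (inverse a) *s y)"
  using assms by (simp_all add: hyperbolic_pair_def Phi_iff herm_scale_left herm_scale_right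
      vector_smult_assoc)

lemma orbital_of_R_rel:
  assumes "x \<in> Phi q" and "y \<in> Phi q" and "\<langle>x, y\<rangle> = a" and "a \<noteq> 0"
  shows "orbital_of x y = R_rel q a"
proof (rule orbital_of_eqI)
  show "(x, y) \<in> R_rel q a"
    using assms by (simp add: R_rel_def)
  show "(x' v* U, y' v* U) \<in> R_rel q a" if "U \<in> GU q" "(x', y') \<in> R_rel q a" for U x' y'
    using that Phi_GU herm_GU by (auto simp: R_rel_def)
  show "\<exists>V\<in>GU q. x v* V = x' \<and> y v* V = y'" if "(x', y') \<in> R_rel q a" for x' y'
  proof -
    have "x' \<in> Phi q" "y' \<in> Phi q" "\<langle>x', y'\<rangle> = a"
      using that by (auto simp: R_rel_def)
    note hyp = hyperbolic_pair_of_herm_nonzero[OF assms] and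
      hyp' = hyperbolic_pair_of_herm_nonzero[OF this assms(4)]
    obtain V where "V \<in> GU q" "x v* V = x'"
      "(bar (inverse a) *s y) v* V = bar (inverse a) *s y'"
      using hyperbolic_pair_transitive[OF hyp(1) hyp'(1)] by blast
    moreover have "y v* V = y'"
      using calculation(3) by (subst hyp(2), subst hyp'(2)) (simp add: scalar_vector_matrix_assoc)
    ultimately show ?thesis
      by blast
  qed
qed

lemma orbital_of_T_rel:
  assumes "(x, y) \<in> T_rel q"
  shows "orbital_of x y = T_rel q"
proof (rule orbital_of_eqI[OF assms])
  show "(x' v* U, y' v* U) \<in> T_rel q" if "U \<in> GU q" "(x', y') \<in> T_rel q"
    for U :: "'a^'n^'n" and x' y'
  proof -
    have "\<nexists>c. y' v* U = c *s (x' v* U)"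
    proof
      assume "\<exists>c. y' v* U = c *s (x' v* U)"
      then obtain c where "y' v* U = (c *s x') v* U"
        by (auto simp: scalar_vector_matrix_assoc)
      then have "y' = c *s x'"
        by (rule GU_cancel[OF that(1)])
      with that(2) show False
        by (auto simp: T_rel_def)
    qed
    then show ?thesis
      using that Phi_GU[OF that(1)] herm_GU[OF that(1)] by (auto simp: T_rel_def)
  qed
  show "\<exists>V\<in>GU q. x v* V = x' \<and> y v* V = y'" if "(x', y') \<in> T_rel q" for x' y'
    using T_rel_completion[OF assms] T_rel_completion[OF that]
      orthogonal_hyperbolic_pairs_transitive by blast
qed

lemma orbital_of_cases:
  assumes "x \<in> Phi q" and "y \<in> Phi q"
  obtains a where "a \<noteq> 0" "orbital_of x y = S_rel q a"
  | a where "a \<noteq> 0" "orbital_of x y = R_rel q a"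
  | "(x, y) \<in> T_rel q" "orbital_of x y = T_rel q"
proof (cases "\<exists>c. y = c *s x")
  case True
  then obtain c where "y = c *s x"
    by blast
  moreover from this have "c \<noteq> 0"
    using assms(2) by (auto simp: Phi_iff)
  ultimately show ?thesis
    using that(1) orbital_of_S_rel[OF assms(1)] by blast
next
  case not_multiple: False
  show ?thesis
  proof (cases "\<langle>x, y\<rangle> = 0")
    case True
    then have "(x, y) \<in> T_rel q"
      using not_multiple assms by (simp add: T_rel_def)
    then show ?thesis
      using that(3) orbital_of_T_rel by blast
  next
    case False
    then show ?thesis
      using that(2) orbital_of_R_rel[OF assms refl] by blast
  qed
qed

definition isotropic_vec :: "'n::finite \<Rightarrow> 'n \<Rightarrow> 'a^'n" where
  "isotropic_vec i j = axis i 1 + norm_minus_one *s axis j 1"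

lemma isotropic_vec_Phi:
  assumes "i \<noteq> j"
  shows "isotropic_vec i j \<in> Phi q"
proof -
  have "isotropic_vec i j $ i = 1"
    using assms by (simp add: isotropic_vec_def axis_def)
  moreover have "\<langle>isotropic_vec i j, isotropic_vec i j\<rangle> = 1 + norm_minus_one * bar norm_minus_one"
    using assms by (simp add: isotropic_vec_def herm_linear herm_axis_axis)
  ultimately show ?thesis
    using norm_minus_one by (auto simp: Phi_iff)
qed

lemma isotropic_vec_T_rel:
  assumes "distinct [i, j, k, l]"
  shows "(isotropic_vec i j, isotropic_vec k l) \<in> T_rel q"
proof -
  have "\<langle>isotropic_vec i j, isotropic_vec k l\<rangle> = 0"
    using assms by (simp add: isotropic_vec_def herm_linear herm_axis_axis)
  moreover have "isotropic_vec k l \<noteq> c *s isotropic_vec i j" for c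
  proof -
    have "k \<noteq> i" "k \<noteq> j" "k \<noteq> l"
      using assms by auto
    then have "isotropic_vec k l $ k \<noteq> (c *s isotropic_vec i j) $ k"
      by (simp add: isotropic_vec_def axis_def)
    then show ?thesis
      by metis
  qed
  ultimately show ?thesis
    using assms isotropic_vec_Phi[of i j] isotropic_vec_Phi[of k l] by (simp add: T_rel_def)
qed

lemma exists_Phi:
  assumes "2 \<le> CARD('n::finite)"
  shows "\<exists>x::'a^'n. x \<in> Phi q"
proof -
  obtain f :: "nat \<Rightarrow> 'n" where "inj_on f {..<2}"
    using exists_inj_on_lessThan[OF assms] by blast
  then have "f 0 \<noteq> f 1"
    by (simp add: inj_on_eq_iff)
  then show ?thesis
    using isotropic_vec_Phi by blast
qed

lemma exists_T_rel:
  assumes "4 \<le> CARD('n::finite)"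
  shows "\<exists>x y::'a^'n. (x, y) \<in> T_rel q"
proof -
  obtain f :: "nat \<Rightarrow> 'n" where "inj_on f {..<4}"
    using exists_inj_on_lessThan[OF assms] by blast
  then have "distinct [f 0, f 1, f 2, f 3]"
    by (simp add: inj_on_eq_iff)
  then show ?thesis
    using isotropic_vec_T_rel by blast
qed

lemma hyperbolic_partner_scaled:
  assumes "hyperbolic_pair e z" and "a \<noteq> 0"
  shows "bar a *s z \<in> Phi q" and "\<langle>e, bar a *s z\<rangle> = a"
proof -
  have "z \<in> Phi q"
    using assms(1) by (auto simp: hyperbolic_pair_def Phi_iff)
  then show "bar a *s z \<in> Phi q"
    by (rule scale_Phi[rotated]) (simp add: assms(2))
  show "\<langle>e, bar a *s z\<rangle> = a"
    using assms(1) by (simp add: hyperbolic_pair_def herm_scale_right)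
qed

lemma orbital_of_in_orbitals:
  assumes "x \<in> Phi q" and "y \<in> Phi q"
  shows "orbital_of x y \<in> orbitals q"
  using assms unfolding orbitals_eq_orbital_of by blast

lemma orbitals_eq:
  assumes "2 \<le> CARD('n::finite)"
  shows "(orbitals q :: (('a^'n) \<times> ('a^'n)) set set)
    = S_rel q ` (UNIV - {0}) \<union> R_rel q ` (UNIV - {0}) \<union> (if 4 \<le> CARD('n) then {T_rel q} else {})"
    (is "_ = ?R")
proof
  show "orbitals q \<subseteq> ?R"
  proof
    fix Rel :: "(('a^'n) \<times> ('a^'n)) set"
    assume "Rel \<in> orbitals q"
    then obtain x y where xy: "x \<in> Phi q" "y \<in> Phi q" and Rel: "Rel = orbital_of x y"
      by (auto simp: orbitals_eq_orbital_of)
    from xy show "Rel \<in> ?R"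
    proof (cases rule: orbital_of_cases)
      case (1 a)
      then show ?thesis
        using Rel by blast
    next
      case (2 a)
      then show ?thesis
        using Rel by blast
    next
      case 3
      then have "4 \<le> CARD('n)"
        using T_rel_dim by blast
      with 3 show ?thesis
        using Rel by simp
    qed
  qed
  obtain e :: "'a^'n" where e: "e \<in> Phi q"
    using exists_Phi[OF assms] by blast
  obtain z where z: "hyperbolic_pair e z"
    using exists_hyperbolic_pair[OF e] by blast
  have "(S_rel q a :: (('a^'n) \<times> ('a^'n)) set) \<in> orbitals q" if "a \<noteq> 0" for a
    using orbital_of_S_rel[OF e that] orbital_of_in_orbitals[OF e scale_Phi[OF that e]] by simp
  moreover have "(R_rel q a :: (('a^'n) \<times> ('a^'n)) set) \<in> orbitals q" if "a \<noteq> 0" for a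
    using orbital_of_R_rel[OF e hyperbolic_partner_scaled[OF z that] that]
      orbital_of_in_orbitals[OF e hyperbolic_partner_scaled(1)[OF z that]] by simp
  moreover have "(T_rel q :: (('a^'n) \<times> ('a^'n)) set) \<in> orbitals q" if n4: "4 \<le> CARD('n)"
  proof -
    obtain x y :: "'a^'n" where xy: "(x, y) \<in> T_rel q"
      using exists_T_rel[OF n4] by blast
    then have "x \<in> Phi q" "y \<in> Phi q"
      by (simp_all add: T_rel_def)
    then have "orbital_of x y \<in> orbitals q"
      by (rule orbital_of_in_orbitals)
    then show ?thesis
      using orbital_of_T_rel[OF xy] by simp
  qed
  ultimately show "?R \<subseteq> orbitals q"
    by (simp add: image_subset_iff)
qed

lemma S_R_T_rel_distinct:
  assumes "2 \<le> CARD('n::finite)"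
  shows "inj_on (S_rel q :: 'a \<Rightarrow> (('a^'n) \<times> ('a^'n)) set) (UNIV - {0})"
    and "inj_on (R_rel q :: 'a \<Rightarrow> (('a^'n) \<times> ('a^'n)) set) (UNIV - {0})"
    and "S_rel q ` (UNIV - {0}) \<inter> (R_rel q ` (UNIV - {0}) :: (('a^'n) \<times> ('a^'n)) set set) = {}"
    and "(T_rel q :: (('a^'n) \<times> ('a^'n)) set) \<notin> S_rel q ` (UNIV - {0}) \<union> R_rel q ` (UNIV - {0})"
proof -
  obtain e :: "'a^'n" where e: "e \<in> Phi q"
    using exists_Phi[OF assms] by blast
  obtain z where z: "hyperbolic_pair e z"
    using exists_hyperbolic_pair[OF e] by blast
  have e_iso: "e \<noteq> 0" "\<langle>e, e\<rangle> = 0"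
    using e by (simp_all add: Phi_iff)
  have S: "(e, a *s e) \<in> S_rel q a" if "a \<noteq> 0" for a
    using e scale_Phi[OF that e] by (simp add: S_rel_def)
  have R: "(e, bar a *s z) \<in> R_rel q a" if "a \<noteq> 0" for a
    using e hyperbolic_partner_scaled[OF z that] by (simp add: R_rel_def)
  show "inj_on (S_rel q :: 'a \<Rightarrow> (('a^'n) \<times> ('a^'n)) set) (UNIV - {0})"
  proof (rule inj_onI)
    fix a b :: 'a
    assume "a \<in> UNIV - {0}" "b \<in> UNIV - {0}" "S_rel q a = (S_rel q b :: (('a^'n) \<times> ('a^'n)) set)"
    then have "(e, a *s e) \<in> S_rel q b"
      using S by auto
    then show "a = b"
      using e_iso by (simp add: S_rel_def)
  qed
  show "inj_on (R_rel q :: 'a \<Rightarrow> (('a^'n) \<times> ('a^'n)) set) (UNIV - {0})"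
  proof (rule inj_onI)
    fix a b :: 'a
    assume "a \<in> UNIV - {0}" "b \<in> UNIV - {0}" "R_rel q a = (R_rel q b :: (('a^'n) \<times> ('a^'n)) set)"
    then have "(e, bar a *s z) \<in> R_rel q b"
      using R by auto
    then show "a = b"
      using hyperbolic_partner_scaled[OF z] \<open>a \<in> UNIV - {0}\<close> by (simp add: R_rel_def)
  qed
  have "(S_rel q a :: (('a^'n) \<times> ('a^'n)) set) \<noteq> R_rel q b" if "a \<noteq> 0" "b \<noteq> 0" for a b
  proof
    assume "(S_rel q a :: (('a^'n) \<times> ('a^'n)) set) = R_rel q b"
    then have "(e, a *s e) \<in> R_rel q b"
      using S[OF that(1)] by simp
    then have "\<langle>e, a *s e\<rangle> = b"
      by (simp add: R_rel_def)
    with e_iso that(2) show False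
      by (simp add: herm_scale_right)
  qed
  then show "S_rel q ` (UNIV - {0}) \<inter> (R_rel q ` (UNIV - {0}) :: (('a^'n) \<times> ('a^'n)) set set) = {}"
    by blast
  have "(T_rel q :: (('a^'n) \<times> ('a^'n)) set) \<noteq> S_rel q a" if "a \<noteq> 0" for a
    using S[OF that] by (auto simp: T_rel_def)
  moreover have "(T_rel q :: (('a^'n) \<times> ('a^'n)) set) \<noteq> R_rel q a" if "a \<noteq> 0" for a
  proof
    assume "(T_rel q :: (('a^'n) \<times> ('a^'n)) set) = R_rel q a"
    then have "(e, bar a *s z) \<in> T_rel q"
      using R[OF that] by simp
    then have "\<langle>e, bar a *s z\<rangle> = 0"
      by (simp add: T_rel_def)
    with hyperbolic_partner_scaled(2)[OF z that] that show False
      by simp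
  qed
  ultimately show "(T_rel q :: (('a^'n) \<times> ('a^'n)) set) \<notin> S_rel q ` (UNIV - {0}) \<union> R_rel q ` (UNIV - {0})"
    by blast
qed

lemma card_S_rel_R_rel:
  assumes "2 \<le> CARD('n::finite)"
  shows "card (S_rel q ` (UNIV - {0}) \<union> (R_rel q ` (UNIV - {0}) :: (('a^'n) \<times> ('a^'n)) set set))
    = 2 * q ^ 2 - 2"
  using card_Un_disjoint[OF _ _ S_R_T_rel_distinct(3)[OF assms]] card_nonzero
    card_image[OF S_R_T_rel_distinct(1)[OF assms]] card_image[OF S_R_T_rel_distinct(2)[OF assms]]
  by simp

end

theorem theorem2p12:
  fixes \<alpha> :: "'a::{field,finite}" and q n :: nat
  assumes "\<exists>p k. prime p \<and> k > 0 \<and> q = p ^ k"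
    and "CARD('a) = q ^ 2"
    and "primitive_elt \<alpha>"
    and "CARD('n::finite) = n"
  shows "(n \<in> {2, 3} \<longrightarrow>
            (orbitals q :: (('a^'n) \<times> ('a^'n)) set set)
              = {S_rel q (\<alpha> ^ i) | i. i < q^2 - 1} \<union> {R_rel q (\<alpha> ^ i) | i. i < q^2 - 1}
          \<and> card (orbitals q :: (('a^'n) \<times> ('a^'n)) set set) = 2 * q^2 - 2)
       \<and> (n \<ge> 4 \<longrightarrow>
            (orbitals q :: (('a^'n) \<times> ('a^'n)) set set)
              = {S_rel q (\<alpha> ^ i) | i. i < q^2 - 1} \<union> {R_rel q (\<alpha> ^ i) | i. i < q^2 - 1} \<union> {T_rel q}
          \<and> card (orbitals q :: (('a^'n) \<times> ('a^'n)) set set) = 2 * q^2 - 1)"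
proof -
  obtain p k where "prime p" "k > 0" "q = p ^ k"
    using assms(1) by blast
  then have "(a + b) ^ q = a ^ q + b ^ q" for a b :: 'a
    using frobenius_add[of p "k * 2" a b k] assms(2) by (simp add: power_mult)
  then interpret frobenius_field q \<alpha>
    using assms(2,3) by unfold_locales
  note reindex = primitive_power_reindex[of "S_rel q :: 'a \<Rightarrow> (('a^'n) \<times> ('a^'n)) set"]
    primitive_power_reindex[of "R_rel q :: 'a \<Rightarrow> (('a^'n) \<times> ('a^'n)) set"]
  show ?thesis
  proof (intro conjI impI)
    assume "n \<in> {2, 3}"
    then have n: "2 \<le> CARD('n)" "\<not> 4 \<le> CARD('n)"
      using assms(4) by auto
    then show "(orbitals q :: (('a^'n) \<times> ('a^'n)) set set)
        = {S_rel q (\<alpha> ^ i) | i. i < q^2 - 1} \<union> {R_rel q (\<alpha> ^ i) | i. i < q^2 - 1}"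
      and "card (orbitals q :: (('a^'n) \<times> ('a^'n)) set set) = 2 * q^2 - 2"
      using orbitals_eq[OF n(1)] card_S_rel_R_rel[OF n(1)] n(2) reindex by simp_all
  next
    assume "n \<ge> 4"
    then have n: "2 \<le> CARD('n)" "4 \<le> CARD('n)"
      using assms(4) by auto
    then show "(orbitals q :: (('a^'n) \<times> ('a^'n)) set set)
        = {S_rel q (\<alpha> ^ i) | i. i < q^2 - 1} \<union> {R_rel q (\<alpha> ^ i) | i. i < q^2 - 1} \<union> {T_rel q}"
      and "card (orbitals q :: (('a^'n) \<times> ('a^'n)) set set) = 2 * q^2 - 1"
      using orbitals_eq[OF n(1)] card_S_rel_R_rel[OF n(1)] S_R_T_rel_distinct(4)[OF n(1)] n(2)
        q_square_minus_1(2) reindex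
      by (simp_all add: card_insert_if)
  qed
qed

end
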